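(* Let $(\mathcal G,L,I)$ be a relational symplectic groupoid. Then $L_2:=L_3\circ(L_1\times Id)$ also satisfies $$L_2=L_3\circ(Id\times L_1).$$
   Context: Relations: for sets $A,B$, a relation $R:A\nrightarrow B$ is a subset $R\subset A\times B$. The composition of $R:A\nrightarrow B$ and $R':B\nrightarrow C$ is $R'\circ R=\{(a,c): \exists b,\ (a,b)\in R,\ (b,c)\in R'\}$. The transpose is $R^*=\{(b,a):(a,b)\in R\}$. Products $R_1\times R_2:A_1\times A_2\nrightarrow B_1\times B_2$ are taken componentwise. $*$ denotes a one-point set, and a relation $*\nrightarrow B$ is identified with a subset of $B$; in particular $L_1\times Id$ is the relation $\mathcal G\nrightarrow\mathcal G\times\mathcal G$ given by $\{(y,(l,y)):l\in L_1\}$, and $Id\times L_1$ is $\{(y,(y,l)):l\in L_1\}$. For a (possibly infinite-dimensional, weak) symplectic manifold $\mathcal M$, $\bar{\mathcal M}$ denotes $\mathcal M$ with the negated symplectic form. An immersed canonical relation $\mathcal M\nrightarrow\mathcal N$ is an immersed Lagrangian submanifold of $\bar{\mathcal M}\times\mathcal N$. A relational symplectic groupoid is a triple $(\mathcal G,L,I)$ consisting of: - a weak symplectic manifold $\mathcal G$ (the induced map $T\mathcal G\to T^*\mathcal G$ is injective); - an immersed Lagrangian submanifold $L\subset\mathcal G^3$; - an antisymplectomorphism $I:\mathcal G\to\mathcal G$. Notation: - $L_{rel}:\mathcal G\times\mathcal G\nrightarrow\bar{\mathcal G}$ is the subset $\{((x,y),z):(x,y,z)\in L\}$. - $I_{rel}:\bar{\mathcal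 G}\nrightarrow\mathcal G$ is the graph $\{(x,I(x))\}$. - $\overline{L_{rel}}:\bar{\mathcal G}\times\bar{\mathcal G}\nrightarrow\mathcal G$ and $\overline{I_{rel}}:\mathcal G\nrightarrow\bar{\mathcal G}$ are the same subsets regarded between the sign-reversed manifolds. - $T_{rel}$ and $\overline{T_{rel}}$ denote the graph of the transposition $(x,y)\mapsto(y,x)$ on $\mathcal G\times\mathcal G$, respectively on $\bar{\mathcal G}\times\bar{\mathcal G}$. - $Id$ denotes the graph of the identity. - $L_I:*\nrightarrow\mathcal G\times\mathcal G$ is the subset $\{(x,I(x)):x\in\mathcal G\}$. - $L_3:=I_{rel}\circ L_{rel}:\mathcal G\times\mathcal G\nrightarrow\mathcal G$, i.e. $L_3=\{((x,y),I(z)):(x,y,z)\in L\}$. Axioms: - (A.1) $L$ is cyclically symmetric: $(x,y,z)\in L\Rightarrow(y,z,x)\in L$. - (A.2) $I^2=\mathrm{id}$. - (A.3) $I_{rel}\circ L_{rel}=\overline{L_{rel}}\circ\overline{T_{rel}}\circ(\overline{I_{rel}}\times\overline{I_{rel}})$. - (A.4) $L_3\circ(L_3\times Id)=L_3\circ(Id\times L_3)$, and this is an immersed Lagrangian submanifold (as a relation $\mathcal G^3\nrightarrow\mathcal G$). - (A.5) $L_1:=L_3\circ L_I$ is an immersed Lagrangian submanifold of $\mathcal G$. - (A.6) $L_3\circ(L_1\times L_1)=L_1$. - (A.7) $L_2:=L_3\circ(L_1\times Id)$ is an immersed Lagrangian submanifold of $\bar{\mathcal G}\times\mathcal G$. 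*)

theory Defs
  imports Main
begin

text \<open>Relations A -/-> B are sets of pairs (A \<times> B) set; the composition R' \<circ> R of the
paper (first R, then R') is Isabelle's relcomp  R O R'.\<close>

definition L_rel :: "('g \<times> 'g \<times> 'g) set \<Rightarrow> (('g \<times> 'g) \<times> 'g) set" where
  "L_rel L = {((x, y), z) | x y z. (x, y, z) \<in> L}"

definition I_rel :: "('g \<Rightarrow> 'g) \<Rightarrow> ('g \<times> 'g) set" where
  "I_rel I = {(x, I x) | x. True}"

definition T_rel :: "(('g \<times> 'g) \<times> ('g \<times> 'g)) set" where
  "T_rel = {((x, y), (y, x)) | x y. True}"

definition prod_rel :: "('a \<times> 'b) set \<Rightarrow> ('c \<times> 'd) set \<Rightarrow> (('a \<times> 'c) \<times> ('b \<times> 'd)) set" where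
  "prod_rel R1 R2 = {((a1, a2), (b1, b2)) | a1 a2 b1 b2. (a1, b1) \<in> R1 \<and> (a2, b2) \<in> R2}"

definition assoc_rel :: "((('g \<times> 'g) \<times> 'g) \<times> ('g \<times> ('g \<times> 'g))) set" where
  "assoc_rel = {(((x, y), z), (x, (y, z))) | x y z. True}"

definition L3 :: "('g \<times> 'g \<times> 'g) set \<Rightarrow> ('g \<Rightarrow> 'g) \<Rightarrow> (('g \<times> 'g) \<times> 'g) set" where
  "L3 L I = L_rel L O I_rel I"

definition L_I :: "('g \<Rightarrow> 'g) \<Rightarrow> (unit \<times> ('g \<times> 'g)) set" where
  "L_I I = {((), (x, I x)) | x. True}"

text \<open>L1 = L3 \<circ> L_I, a relation * -/-> G, identified with a subset of G.\<close>
definition L1 :: "('g \<times> 'g \<times> 'g) set \<Rightarrow> ('g \<Rightarrow> 'g) \<Rightarrow> 'g set" where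
  "L1 L I = {l. ((), l) \<in> L_I I O L3 L I}"

definition L1xId :: "'g set \<Rightarrow> ('g \<times> ('g \<times> 'g)) set" where
  "L1xId S = {(y, (l, y)) | y l. l \<in> S}"

definition IdxL1 :: "'g set \<Rightarrow> ('g \<times> ('g \<times> 'g)) set" where
  "IdxL1 S = {(y, (y, l)) | y l. l \<in> S}"

definition L2 :: "('g \<times> 'g \<times> 'g) set \<Rightarrow> ('g \<Rightarrow> 'g) \<Rightarrow> ('g \<times> 'g) set" where
  "L2 L I = L1xId (L1 L I) O L3 L I"

end

theory Submission
  imports Defs
begin

(* Read ((a, b), c) \<in> L3 L I as "c is a product of a and b".  Unfolding the
   relational definitions, L1 is the set of products of the form x \<cdot> I x, and
     (y, z) \<in> L2 L I                     iff  z = l \<cdot> y  for some l \<in> L1,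
     (y, z) \<in> IdxL1 (L1 L I) O L3 L I   iff  z = y \<cdot> l  for some l \<in> L1.
   Only three axioms are needed: associativity of the product (A.4, read pointwise),
   involutivity of I (A.2) and cyclic symmetry of L (A.1), which together give the
   rotation rule  c = a \<cdot> b \<Longrightarrow> I a = b \<cdot> I c.
   A left unit l = x \<cdot> I x acting on y is moved to the right by re-bracketing:
     (x \<cdot> I x) \<cdot> y = x \<cdot> (I x \<cdot> y) = x \<cdot> v,  and rotation gives  x = y \<cdot> I v, so
     x \<cdot> v = (y \<cdot> I v) \<cdot> v = y \<cdot> (I v \<cdot> v),  where  I v \<cdot> v  is again in L1.
   The converse is the mirror image. *)

lemma mem_L1_iff: "l \<in> L1 L I \<longleftrightarrow> (\<exists>x. ((x, I x), l) \<in> L3 L I)"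
  unfolding L1_def L_I_def by auto

lemma mem_L2_iff: "(y, z) \<in> L2 L I \<longleftrightarrow> (\<exists>l \<in> L1 L I. ((l, y), z) \<in> L3 L I)"
  unfolding L2_def L1xId_def by auto

lemma mem_IdxL1_L3_iff:
  "(y, z) \<in> IdxL1 S O L3 L I \<longleftrightarrow> (\<exists>l \<in> S. ((y, l), z) \<in> L3 L I)"
  unfolding IdxL1_def by auto

locale assoc_cyclic_involution =
  fixes L :: "('g \<times> 'g \<times> 'g) set" and I :: "'g \<Rightarrow> 'g"
  assumes cyclic: "\<And>x y z. (x, y, z) \<in> L \<Longrightarrow> (y, z, x) \<in> L"
    and involution: "\<And>x. I (I x) = x"
    and assoc: "prod_rel (L3 L I) Id O L3 L I = assoc_rel O prod_rel Id (L3 L I) O L3 L I"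
begin

abbreviation product :: "'g \<Rightarrow> 'g \<Rightarrow> 'g \<Rightarrow> bool" where
  "product a b c \<equiv> ((a, b), c) \<in> L3 L I"

lemma product_iff: "product a b c \<longleftrightarrow> (a, b, I c) \<in> L"
  unfolding L3_def L_rel_def I_rel_def by (auto simp: involution)

lemma product_assoc:
  "(\<exists>u. product x y u \<and> product u w r) \<longleftrightarrow> (\<exists>v. product y w v \<and> product x v r)"
proof -
  have "(((x, y), w), r) \<in> prod_rel (L3 L I) Id O L3 L I \<longleftrightarrow>
        (\<exists>u. product x y u \<and> product u w r)"
    unfolding prod_rel_def by blast
  moreover have "(((x, y), w), r) \<in> assoc_rel O prod_rel Id (L3 L I) O L3 L I \<longleftrightarrow>
        (\<exists>v. product y w v \<and> product x v r)"
    unfolding prod_rel_def assoc_rel_def by blast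
  ultimately show ?thesis
    using assoc by simp
qed

lemma product_rotate: "product a b c \<Longrightarrow> product b (I c) (I a)"
  using cyclic by (simp add: product_iff involution)

lemma inverse_product_in_L1: "product (I v) v w \<Longrightarrow> w \<in> L1 L I"
  using mem_L1_iff[of w L I] involution by metis

lemma left_unit_to_right:
  assumes "l \<in> L1 L I" and "product l y z"
  shows "\<exists>l' \<in> L1 L I. product y l' z"
proof -
  obtain x where "product x (I x) l"
    using assms(1) mem_L1_iff[of l L I] by blast
  then obtain v where v: "product (I x) y v" "product x v z"
    using assms(2) product_assoc[of x "I x" y z] by blast
  have "product y (I v) x"
    using product_rotate[OF v(1)] involution by simp
  then obtain w where "product (I v) v w" "product y w z"
    using v(2) product_assoc[of y "I v" v z] by blast
  then show ?thesis
    using inverse_product_in_L1 by blast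
qed

lemma right_unit_to_left:
  assumes "l \<in> L1 L I" and "product y l z"
  shows "\<exists>l' \<in> L1 L I. product l' y z"
proof -
  obtain a where "product a (I a) l"
    using assms(1) mem_L1_iff[of l L I] by blast
  then obtain v where v: "product y a v" "product v (I a) z"
    using assms(2) product_assoc[of y a "I a" z] by blast
  have "product (I v) y (I a)"
    using product_rotate[OF product_rotate[OF v(1)]] involution by simp
  then obtain w where "product v (I v) w" "product w y z"
    using v(2) product_assoc[of v "I v" y z] by blast
  then show ?thesis
    using mem_L1_iff[of w L I] by blast
qed

lemma L2_eq_right_action: "L2 L I = IdxL1 (L1 L I) O L3 L I"
proof (rule set_eqI, clarify)
  fix y z
  show "(y, z) \<in> L2 L I \<longleftrightarrow> (y, z) \<in> IdxL1 (L1 L I) O L3 L I"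
    unfolding mem_L2_iff mem_IdxL1_L3_iff
    using left_unit_to_right right_unit_to_left by blast
qed

end

theorem mainTheorem3:
  fixes L :: "('g \<times> 'g \<times> 'g) set" and I :: "'g \<Rightarrow> 'g"
  assumes A1: "\<And>x y z. (x, y, z) \<in> L \<Longrightarrow> (y, z, x) \<in> L"
    and A2: "\<And>x. I (I x) = x"
    and A3: "L3 L I = prod_rel (I_rel I) (I_rel I) O T_rel O L_rel L"
    and A4: "prod_rel (L3 L I) Id O L3 L I = assoc_rel O prod_rel Id (L3 L I) O L3 L I"
    and A6: "{z. \<exists>a b. a \<in> L1 L I \<and> b \<in> L1 L I \<and> ((a, b), z) \<in> L3 L I} = L1 L I"
  shows "L2 L I = IdxL1 (L1 L I) O L3 L I"
proof -
  interpret assoc_cyclic_involution L I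
    using A1 A2 A4 by unfold_locales
  show ?thesis
    by (rule L2_eq_right_action)
qed

end
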